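(* Let $(X,d)$ be a reflexive Busemann convex geodesic metric space and let $A,B\subseteq X$ be nonempty, closed and convex, with $A$ bounded. Let $T:A\cup B\to A\cup B$ be a noncyclic relatively nonexpansive mapping, and suppose the pair $(A,B)$ has proximal normal structure. Then there exists $(x,y)\in A\times B$ such that $x=Tx$, $y=Ty$ and $d(x,y)=\operatorname{dist}(A,B)$.
   Context: $\operatorname{dist}(A,B)=\inf\{d(x,y):x\in A,y\in B\}$, $\delta(x,A)=\sup\{d(x,y):y\in A\}$, $\delta(A,B)=\sup\{d(x,y):x\in A,y\in B\}$. A geodesic space is one in which any two points are joined by a geodesic segment; a subset is convex if it contains every geodesic segment joining two of its points. $X$ is Busemann convex if for any geodesics $c_1:[0,l_1]\to X$, $c_2:[0,l_2]\to X$, $d(c_1(tl_1),c_2(tl_2))\le (1-t)d(c_1(0),c_2(0))+t\,d(c_1(l_1),c_2(l_2))$ for all $t\in[0,1]$. $X$ is reflexive if every decreasing chain of nonempty closed convex bounded subsets has nonempty intersection. $T$ is relatively nonexpansive if $d(Tx,Ty)\le d(x,y)$ for all $x\in A$, $y\in B$; it is noncyclic if $T(A)\subseteq A$ and $T(B)\subseteq B$. A pair $(H_1,H_2)$ is proximal if for every $(a,b)\in H_1\times H_2$ there is $(a',b')\in H_1\times H_2$ with $d(a,b')=d(a',b)=\operatorname{dist}(H_1,H_2)$. A convex pair $(K_1,K_2)$ has proximal normal structure if for every closed bounded convex proximal pair $(H_1,H_2)$ with $H_1\subseteq K_1$, $H_2\subseteq K_2$, $\operatorname{dist}(H_1,H_2)=\operatorname{dist}(K_1,K_2)$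 and $\delta(H_1,H_2)>\operatorname{dist}(H_1,H_2)$, there exists $(x_1,x_2)\in H_1\times H_2$ with $\delta(x_1,H_2)<\delta(H_1,H_2)$ and $\delta(x_2,H_1)<\delta(H_1,H_2)$. *)

theory Defs
  imports "HOL-Analysis.Analysis"
begin

definition geodesic_seg :: "(real \<Rightarrow> 'a::metric_space) \<Rightarrow> real \<Rightarrow> 'a \<Rightarrow> 'a \<Rightarrow> bool" where
  "geodesic_seg c l x y \<longleftrightarrow> 0 \<le> l \<and> c 0 = x \<and> c l = y \<and>
     (\<forall>s\<in>{0..l}. \<forall>t\<in>{0..l}. dist (c s) (c t) = \<bar>s - t\<bar>)"

definition geodesic_space :: "'a::metric_space itself \<Rightarrow> bool" where
  "geodesic_space _ \<longleftrightarrow> (\<forall>x y::'a. \<exists>c l. geodesic_seg c l x y)"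

definition gconvex :: "'a::metric_space set \<Rightarrow> bool" where
  "gconvex S \<longleftrightarrow> (\<forall>x\<in>S. \<forall>y\<in>S. \<forall>c l. geodesic_seg c l x y \<longrightarrow> c ` {0..l} \<subseteq> S)"

definition busemann_convex :: "'a::metric_space itself \<Rightarrow> bool" where
  "busemann_convex _ \<longleftrightarrow>
    (\<forall>(c1::real \<Rightarrow> 'a) c2 l1 l2 x1 y1 x2 y2.
       geodesic_seg c1 l1 x1 y1 \<and> geodesic_seg c2 l2 x2 y2 \<longrightarrow>
       (\<forall>t\<in>{0..1}. dist (c1 (t * l1)) (c2 (t * l2))
            \<le> (1 - t) * dist (c1 0) (c2 0) + t * dist (c1 l1) (c2 l2)))"

definition reflexive_space :: "'a::metric_space itself \<Rightarrow> bool" where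
  "reflexive_space _ \<longleftrightarrow>
    (\<forall>\<C>::'a set set. \<C> \<noteq> {} \<and> subset.chain UNIV \<C> \<and>
       (\<forall>S\<in>\<C>. S \<noteq> {} \<and> closed S \<and> gconvex S \<and> bounded S) \<longrightarrow> \<Inter>\<C> \<noteq> {})"

definition set_dist :: "'a::metric_space set \<Rightarrow> 'a set \<Rightarrow> real" where
  "set_dist A B = Inf {dist x y | x y. x \<in> A \<and> y \<in> B}"

definition pt_delta :: "'a::metric_space \<Rightarrow> 'a set \<Rightarrow> real" where
  "pt_delta x A = Sup {dist x y | y. y \<in> A}"

definition set_delta :: "'a::metric_space set \<Rightarrow> 'a set \<Rightarrow> real" where
  "set_delta A B = Sup {dist x y | x y. x \<in> A \<and> y \<in> B}"

definition proximal_pair :: "'a::metric_space set \<Rightarrow> 'a set \<Rightarrow> bool" where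
  "proximal_pair H1 H2 \<longleftrightarrow>
    (\<forall>a\<in>H1. \<forall>b\<in>H2. \<exists>a'\<in>H1. \<exists>b'\<in>H2.
        dist a b' = set_dist H1 H2 \<and> dist a' b = set_dist H1 H2)"

definition proximal_normal_structure :: "'a::metric_space set \<Rightarrow> 'a set \<Rightarrow> bool" where
  "proximal_normal_structure K1 K2 \<longleftrightarrow>
    (\<forall>H1 H2. H1 \<noteq> {} \<and> H2 \<noteq> {} \<and> closed H1 \<and> closed H2 \<and> bounded H1 \<and> bounded H2 \<and>
       gconvex H1 \<and> gconvex H2 \<and> proximal_pair H1 H2 \<and> H1 \<subseteq> K1 \<and> H2 \<subseteq> K2 \<and>
       set_dist H1 H2 = set_dist K1 K2 \<and> set_delta H1 H2 > set_dist H1 H2 \<longrightarrow>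
       (\<exists>x1\<in>H1. \<exists>x2\<in>H2. pt_delta x1 H2 < set_delta H1 H2 \<and> pt_delta x2 H1 < set_delta H1 H2))"

end

theory Submission
  imports Defs
begin

text \<open>Reflexivity and Zorn's lemma give a minimal pair \<open>(K\<^sub>1, K\<^sub>2)\<close> of closed convex
  \<open>T\<close>-invariant subsets of \<open>(A, B)\<close> still containing two points at distance \<open>D = dist(A, B)\<close>.
  Minimality makes the pair proximal. It also makes the set of points of \<open>K\<^sub>1\<close> within \<open>\<rho>\<close>
  of all of \<open>K\<^sub>2\<close> empty or all of \<open>K\<^sub>1\<close>, since nonexpansiveness makes that set
  \<open>T\<close>-invariant; so proximal normal structure forces every point of \<open>K\<^sub>1\<close> to be at distance
  exactly \<open>D\<close> from every point of \<open>K\<^sub>2\<close>. In a Busemann convex space a geodesic lying on a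
  sphere is trivial (its midpoint halves the radius, and iterating shrinks it to zero), so
  \<open>K\<^sub>1\<close> and \<open>K\<^sub>2\<close> are singletons, which \<open>T\<close> must fix.\<close>

lemma geodesic_seg_length: "geodesic_seg c l x y \<Longrightarrow> l = dist x y"
  unfolding geodesic_seg_def
  by (metis atLeastAtMost_iff abs_minus_commute abs_of_nonneg diff_zero order_refl dist_commute)

lemma geodesic_seg_dist:
  "geodesic_seg c l x y \<Longrightarrow> s \<in> {0..l} \<Longrightarrow> t \<in> {0..l} \<Longrightarrow> dist (c s) (c t) = \<bar>s - t\<bar>"
  unfolding geodesic_seg_def by blast

lemma geodesic_seg_start: "geodesic_seg c l x y \<Longrightarrow> c 0 = x"
  and geodesic_seg_end: "geodesic_seg c l x y \<Longrightarrow> c l = y"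
  and geodesic_seg_nonneg: "geodesic_seg c l x y \<Longrightarrow> 0 \<le> l"
  unfolding geodesic_seg_def by auto

lemma geodesic_seg_dist_start: "geodesic_seg c l x y \<Longrightarrow> s \<in> {0..l} \<Longrightarrow> dist x (c s) = s"
  using geodesic_seg_dist[of c l x y 0 s] geodesic_seg_start[of c l x y] geodesic_seg_nonneg[of c l x y]
  by auto

lemma geodesic_seg_dist_end: "geodesic_seg c l x y \<Longrightarrow> s \<in> {0..l} \<Longrightarrow> dist (c s) y = l - s"
  using geodesic_seg_dist[of c l x y s l] geodesic_seg_end[of c l x y] geodesic_seg_nonneg[of c l x y]
  by auto

lemma geodesic_seg_const: "geodesic_seg (\<lambda>_. y) 0 y y"
  unfolding geodesic_seg_def by auto

lemma geodesic_seg_reverse: "geodesic_seg c l x y \<Longrightarrow> geodesic_seg (\<lambda>s. c (l - s)) l y x"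
  unfolding geodesic_seg_def by (auto simp: abs_minus_commute)

lemma geodesic_seg_exists:
  "geodesic_space TYPE('a::metric_space) \<Longrightarrow> \<exists>c. geodesic_seg c (dist x y) (x::'a) y"
  unfolding geodesic_space_def by (metis geodesic_seg_length)

lemma geodesic_seg_concat:
  assumes a: "geodesic_seg \<alpha> s1 z a" and b: "geodesic_seg \<beta> s2 a m" and d: "dist z m = s1 + s2"
  shows "geodesic_seg (\<lambda>t. if t \<le> s1 then \<alpha> t else \<beta> (t - s1)) (s1 + s2) z m"
proof -
  have s1: "0 \<le> s1" and s2: "0 \<le> s2" using geodesic_seg_nonneg a b by auto
  have ends: "\<alpha> 0 = z" "\<alpha> s1 = a" "\<beta> 0 = a" "\<beta> s2 = m"
    using geodesic_seg_start geodesic_seg_end a b by auto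
  have cross: "dist (\<alpha> u) (\<beta> (v - s1)) = v - u" if u: "u \<in> {0..s1}" and v: "v \<in> {s1..s1+s2}" for u v
  proof -
    have "dist (\<alpha> u) (\<beta> (v - s1)) \<le> dist (\<alpha> u) a + dist a (\<beta> (v - s1))" by (rule dist_triangle)
    also have "\<dots> = (s1 - u) + (v - s1)"
      using geodesic_seg_dist_end[OF a u] geodesic_seg_dist_start[OF b, of "v - s1"] v by auto
    finally have le: "dist (\<alpha> u) (\<beta> (v - s1)) \<le> v - u" by simp
    \<comment> \<open>The total length \<open>dist z m\<close> leaves no room for a shortcut.\<close>
    have "s1 + s2 \<le> dist z (\<alpha> u) + dist (\<alpha> u) (\<beta> (v - s1)) + dist (\<beta> (v - s1)) m"
      using d dist_triangle[of z m "\<alpha> u"] dist_triangle[of "\<alpha> u" m "\<beta> (v - s1)"] by linarith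
    also have "\<dots> = u + dist (\<alpha> u) (\<beta> (v - s1)) + (s2 - (v - s1))"
      using geodesic_seg_dist_start[OF a u] geodesic_seg_dist_end[OF b, of "v - s1"] v by auto
    finally show ?thesis using le by linarith
  qed
  have "m = a" if "s2 = 0" using geodesic_seg_length[OF b] that by simp
  then have "(if s1 + s2 \<le> s1 then \<alpha> (s1 + s2) else \<beta> (s1 + s2 - s1)) = m"
    using s2 ends by auto
  moreover have "dist (if u \<le> s1 then \<alpha> u else \<beta> (u - s1)) (if v \<le> s1 then \<alpha> v else \<beta> (v - s1))
      = \<bar>u - v\<bar>" if "u \<in> {0..s1+s2}" "v \<in> {0..s1+s2}" for u v
    using that geodesic_seg_dist[OF a, of u v] geodesic_seg_dist[OF b, of "u - s1" "v - s1"]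
      cross[of u v] cross[of v u] by (auto simp: dist_commute)
  ultimately show ?thesis
    unfolding geodesic_seg_def using s1 s2 ends by auto
qed

lemma busemann_convexD:
  assumes "busemann_convex TYPE('a::metric_space)"
    and "geodesic_seg c1 l1 x1 y1" "geodesic_seg c2 l2 x2 (y2::'a)" "t \<in> {0..1}"
  shows "dist (c1 (t * l1)) (c2 (t * l2)) \<le> (1 - t) * dist x1 x2 + t * dist y1 y2"
  using assms unfolding busemann_convex_def by (metis geodesic_seg_start geodesic_seg_end)

lemma busemann_midpoints_dist_le:
  assumes "busemann_convex TYPE('a::metric_space)"
    and "geodesic_seg c1 l1 x y1" "geodesic_seg c2 l2 x (y2::'a)"
  shows "dist (c1 (l1 / 2)) (c2 (l2 / 2)) \<le> dist y1 y2 / 2"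
  using busemann_convexD[OF assms, of "1/2"] by simp

lemma busemann_geodesic_dist_le_max:
  assumes bc: "busemann_convex TYPE('a::metric_space)"
    and g1: "geodesic_seg c1 l1 x1 y1" and g2: "geodesic_seg c2 l2 x2 (y2::'a)" and s: "s \<in> {0..l1}"
  shows "\<exists>s'\<in>{0..l2}. dist (c1 s) (c2 s') \<le> max (dist x1 x2) (dist y1 y2)"
proof (cases "l1 = 0")
  case True
  then show ?thesis
    using s geodesic_seg_start[OF g1] geodesic_seg_start[OF g2] geodesic_seg_nonneg[OF g2]
    by (intro bexI[of _ 0]) auto
next
  case False
  define t where "t = s / l1"
  have t: "t \<in> {0..1}" and "c1 s = c1 (t * l1)" using s False by (auto simp: t_def)
  then have "dist (c1 s) (c2 (t * l2)) \<le> (1 - t) * dist x1 x2 + t * dist y1 y2"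
    using busemann_convexD[OF bc g1 g2 t] by simp
  also have "\<dots> \<le> max (dist x1 x2) (dist y1 y2)"
    using t by (intro convex_bound_le) auto
  finally have "dist (c1 s) (c2 (t * l2)) \<le> max (dist x1 x2) (dist y1 y2)" .
  moreover have "t * l2 \<in> {0..l2}"
    using t geodesic_seg_nonneg[OF g2] by (auto intro: mult_left_le_one_le)
  ultimately show ?thesis by blast
qed

lemma busemann_dist_geodesic_le_max:
  assumes "busemann_convex TYPE('a::metric_space)" "geodesic_seg c l x1 x2" "s \<in> {0..l}"
  shows "dist (c s) (y::'a) \<le> max (dist x1 y) (dist x2 y)"
  using busemann_geodesic_dist_le_max[OF assms(1,2) geodesic_seg_const[of y] assms(3)] by auto

lemma gconvexI:
  "(\<And>x y c l s. x \<in> S \<Longrightarrow> y \<in> S \<Longrightarrow> geodesic_seg c l x y \<Longrightarrow> s \<in> {0..l} \<Longrightarrow> c s \<in> S) \<Longrightarrow> gconvex S"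
  unfolding gconvex_def by blast

lemma gconvexD:
  "gconvex S \<Longrightarrow> x \<in> S \<Longrightarrow> y \<in> S \<Longrightarrow> geodesic_seg c l x y \<Longrightarrow> s \<in> {0..l} \<Longrightarrow> c s \<in> S"
  unfolding gconvex_def by blast

lemma gconvex_Int: "gconvex S \<Longrightarrow> gconvex U \<Longrightarrow> gconvex (S \<inter> U)"
  unfolding gconvex_def by blast

lemma gconvex_Inter: "(\<And>S. S \<in> F \<Longrightarrow> gconvex S) \<Longrightarrow> gconvex (\<Inter>F)"
  unfolding gconvex_def by blast

lemma gconvex_cball:
  assumes "busemann_convex TYPE('a::metric_space)"
  shows "gconvex (cball (z::'a) r)"
proof (rule gconvexI)
  fix x y c l s
  assume "x \<in> cball z r" "y \<in> cball z r" "geodesic_seg c l x y" "s \<in> {0..l}"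
  then show "c s \<in> cball z r"
    using busemann_dist_geodesic_le_max[OF assms, of c l x y s z] by (auto simp: dist_commute)
qed

lemma busemann_midpoint_unique:
  assumes bc: "busemann_convex TYPE('a::metric_space)" and gs: "geodesic_space TYPE('a)"
    and "dist z p = h" "dist p w = h" "dist z q = h" "dist q w = h" "dist z w = 2 * h"
  shows "p = (q::'a)"
proof -
  obtain \<alpha>1 \<beta>1 \<alpha>2 \<beta>2 where g: "geodesic_seg \<alpha>1 h z p" "geodesic_seg \<beta>1 h p w"
    "geodesic_seg \<alpha>2 h z q" "geodesic_seg \<beta>2 h q w"
    using geodesic_seg_exists[OF gs] assms(3-6) by metis
  have d: "dist z w = h + h" using assms by simp
  have "dist ((\<lambda>t. if t \<le> h then \<alpha>1 t else \<beta>1 (t - h)) ((h + h) / 2))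
      ((\<lambda>t. if t \<le> h then \<alpha>2 t else \<beta>2 (t - h)) ((h + h) / 2)) \<le> dist w w / 2"
    by (rule busemann_midpoints_dist_le[OF bc geodesic_seg_concat[OF g(1,2) d]
          geodesic_seg_concat[OF g(3,4) d]])
  then show ?thesis using geodesic_seg_end[OF g(1)] geodesic_seg_end[OF g(3)] by simp
qed

text \<open>If a geodesic lies on the sphere of radius \<open>r\<close> about \<open>z\<close>, the midpoints of \<open>[x, z]\<close> and
  \<open>[y, z]\<close> coincide (both are midpoints of \<open>z\<close> and the midpoint of the geodesic), and the geodesic lies
  on the sphere of radius \<open>r/2\<close> about this common point.\<close>

lemma geodesic_on_sphere_halve:
  assumes bc: "busemann_convex TYPE('a::metric_space)" and gs: "geodesic_space TYPE('a)"
    and g: "geodesic_seg c L x y" and on_sphere: "\<forall>t\<in>{0..L}. dist (c t) (z::'a) = r"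
  shows "\<exists>p. \<forall>t\<in>{0..L}. dist (c t) p = r / 2"
proof -
  have L: "0 \<le> L" using geodesic_seg_nonneg[OF g] .
  have xz: "dist x z = r" and yz: "dist y z = r"
    using on_sphere geodesic_seg_start[OF g] geodesic_seg_end[OF g] L by auto
  obtain \<gamma>x \<gamma>y where \<gamma>x: "geodesic_seg \<gamma>x r x z" and \<gamma>y: "geodesic_seg \<gamma>y r y z"
    using geodesic_seg_exists[OF gs] xz yz by metis
  define p q m where "p = \<gamma>x (r / 2)" and "q = \<gamma>y (r / 2)" and "m = c (L / 2)"
  have half: "r / 2 \<in> {0..r}" using xz by auto
  have zp: "dist z p = r / 2" and xp: "dist x p = r / 2"
    using geodesic_seg_dist_end[OF \<gamma>x half] geodesic_seg_dist_start[OF \<gamma>x half]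
    by (auto simp: p_def dist_commute)
  have zq: "dist z q = r / 2" and yq: "dist y q = r / 2"
    using geodesic_seg_dist_end[OF \<gamma>y half] geodesic_seg_dist_start[OF \<gamma>y half]
    by (auto simp: q_def dist_commute)
  have zm: "dist z m = r" using on_sphere L by (simp add: m_def dist_commute)
  have "dist p m \<le> r / 2"
    using busemann_midpoints_dist_le[OF bc \<gamma>x g] yz by (simp add: p_def m_def dist_commute)
  then have pm: "dist p m = r / 2" using zm zp dist_triangle[of z m p] by linarith
  have "dist q m \<le> r / 2"
    using busemann_midpoints_dist_le[OF bc \<gamma>y geodesic_seg_reverse[OF g]] xz
    by (simp add: q_def m_def dist_commute)
  then have qm: "dist q m = r / 2" using zm zq dist_triangle[of z m q] by linarith
  have "p = q" by (rule busemann_midpoint_unique[OF bc gs zp pm zq qm]) (use zm in simp)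
  show ?thesis
  proof (intro exI ballI antisym)
    fix t assume t: "t \<in> {0..L}"
    show "dist (c t) p \<le> r / 2"
      using busemann_dist_geodesic_le_max[OF bc g t, of p] xp yq \<open>p = q\<close> by simp
    show "r / 2 \<le> dist (c t) p"
      using on_sphere t zp dist_triangle[of "c t" z p] by (simp add: dist_commute)
  qed
qed

lemma geodesic_on_sphere_trivial:
  assumes bc: "busemann_convex TYPE('a::metric_space)" and gs: "geodesic_space TYPE('a)"
    and g: "geodesic_seg c L x y" and on_sphere: "\<forall>t\<in>{0..L}. dist (c t) (z::'a) = r"
  shows "x = y"
proof -
  have shrink: "\<exists>p. \<forall>t\<in>{0..L}. dist (c t) p = r / 2 ^ n" for n
  proof (induction n)
    case 0
    then show ?case using on_sphere by auto
  next
    case (Suc n)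
    then obtain p where "\<forall>t\<in>{0..L}. dist (c t) p = r / 2 ^ n" by blast
    from geodesic_on_sphere_halve[OF bc gs g this] show ?case by (simp add: field_simps)
  qed
  have L: "0 \<le> L" using geodesic_seg_nonneg[OF g] .
  have "dist x y \<le> 2 * r / 2 ^ n" for n
  proof -
    obtain p where p: "\<forall>t\<in>{0..L}. dist (c t) p = r / 2 ^ n" using shrink by blast
    have "dist x y \<le> dist x p + dist y p" by (rule dist_triangle2)
    also have "\<dots> = 2 * r / 2 ^ n"
      using p geodesic_seg_start[OF g] geodesic_seg_end[OF g] L by auto
    finally show ?thesis .
  qed
  then have "dist x y \<le> 0"
    by (intro LIMSEQ_le_const[OF LIMSEQ_divide_realpow_zero[of 2 "2 * r"]]) auto
  then show ?thesis by simp
qed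

lemma gconvex_on_sphere_trivial:
  assumes "busemann_convex TYPE('a::metric_space)" "geodesic_space TYPE('a)"
    and "gconvex S" "\<forall>s\<in>S. dist s (z::'a) = r" "x \<in> S" "x' \<in> S"
  shows "x = x'"
proof -
  obtain c where c: "geodesic_seg c (dist x x') x x'" using geodesic_seg_exists[OF assms(2)] by blast
  have "\<forall>t\<in>{0..dist x x'}. dist (c t) z = r" using assms(3-6) gconvexD[OF assms(3) _ _ c] by blast
  then show ?thesis by (rule geodesic_on_sphere_trivial[OF assms(1,2) c])
qed

lemma reflexive_space_common_point:
  assumes "reflexive_space TYPE('a::metric_space)" "I \<noteq> {}"
    and "\<And>i j. i \<in> I \<Longrightarrow> j \<in> I \<Longrightarrow> S i \<subseteq> S j \<or> S j \<subseteq> S i"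
    and "\<And>i. i \<in> I \<Longrightarrow> S i \<noteq> {} \<and> closed (S i) \<and> gconvex (S i) \<and> bounded (S i)"
  shows "\<exists>x::'a. \<forall>i\<in>I. x \<in> S i"
proof -
  have "\<Inter>(S ` I) \<noteq> {}"
    using assms(1) unfolding reflexive_space_def subset_chain_def
    by (rule allE[of _ "S ` I"]) (use assms(2-4) in blast)
  then show ?thesis by blast
qed

lemma infdist_less_imp_dist_less: "F \<noteq> {} \<Longrightarrow> infdist x F < e \<Longrightarrow> \<exists>y\<in>F. dist x y < e"
  unfolding infdist_notempty by (subst (asm) cINF_less_iff) (auto intro: bdd_belowI2[where m=0])

lemma closed_infdist_sublevel: "closed E \<Longrightarrow> closed {x\<in>E. infdist x F \<le> r}"
  unfolding Collect_conj_eq Collect_mem_eq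
  by (intro closed_Int closed_Collect_le) (auto intro: continuous_intros)

lemma gconvex_infdist_sublevel:
  fixes E F :: "'a::metric_space set"
  assumes bc: "busemann_convex TYPE('a)" and gs: "geodesic_space TYPE('a)"
    and E: "gconvex E" and F: "gconvex F" "F \<noteq> {}"
  shows "gconvex {x\<in>E. infdist x F \<le> r}"
proof (rule gconvexI)
  fix x1 x2 c l s
  assume x1: "x1 \<in> {x\<in>E. infdist x F \<le> r}" and x2: "x2 \<in> {x\<in>E. infdist x F \<le> r}"
    and g: "geodesic_seg c l x1 x2" and s: "s \<in> {0..l}"
  have "infdist (c s) F \<le> r + e" if e: "0 < e" for e
  proof -
    have "infdist x1 F < r + e" "infdist x2 F < r + e" using x1 x2 e by auto
    then obtain y1 y2 where y: "y1 \<in> F" "y2 \<in> F" "dist x1 y1 < r + e" "dist x2 y2 < r + e"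
      using infdist_less_imp_dist_less[OF F(2)] by meson
    obtain c' where g': "geodesic_seg c' (dist y1 y2) y1 y2" using geodesic_seg_exists[OF gs] by blast
    obtain s' where s': "s' \<in> {0..dist y1 y2}" "dist (c s) (c' s') \<le> max (dist x1 y1) (dist x2 y2)"
      using busemann_geodesic_dist_le_max[OF bc g g' s] by blast
    have "infdist (c s) F \<le> dist (c s) (c' s')" by (rule infdist_le[OF gconvexD[OF F(1) y(1,2) g' s'(1)]])
    then show ?thesis using s'(2) y(3,4) by linarith
  qed
  then show "c s \<in> {x\<in>E. infdist x F \<le> r}"
    using gconvexD[OF E _ _ g s] x1 x2 field_le_epsilon by blast
qed

lemma infdist_sublevel_mono:
  assumes "E \<subseteq> E'" "F \<subseteq> F'" "F \<noteq> {}"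
  shows "{x\<in>E. infdist x F \<le> r} \<subseteq> {x\<in>E'. infdist x F' \<le> r}"
proof -
  have "infdist x F' \<le> infdist x F" for x using infdist_mono[OF assms(2,3)] .
  then show ?thesis using assms(1) by (auto intro: order_trans)
qed

lemma reflexive_infdist_attained:
  assumes rf: "reflexive_space TYPE('a::metric_space)" and bc: "busemann_convex TYPE('a)"
    and F: "closed F" "gconvex F" "F \<noteq> {}" and d: "infdist x F \<le> r"
  shows "\<exists>y\<in>F. dist (x::'a) y \<le> r"
proof -
  have "\<exists>y. \<forall>e\<in>{0<..}. y \<in> F \<inter> cball x (r + e)"
  proof (rule reflexive_space_common_point[OF rf])
    fix e d :: real
    show "F \<inter> cball x (r + e) \<subseteq> F \<inter> cball x (r + d) \<or> F \<inter> cball x (r + d) \<subseteq> F \<inter> cball x (r + e)"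
      by (cases "e \<le> d") auto
    assume "e \<in> {0<..}"
    then have "\<exists>y\<in>F. dist x y < r + e" using infdist_less_imp_dist_less[OF F(3)] d by simp
    then show "F \<inter> cball x (r + e) \<noteq> {} \<and> closed (F \<inter> cball x (r + e))
        \<and> gconvex (F \<inter> cball x (r + e)) \<and> bounded (F \<inter> cball x (r + e))"
      using F gconvex_Int[OF F(2) gconvex_cball[OF bc]] by fastforce
  qed auto
  then obtain y where y: "\<forall>e\<in>{0<..}. y \<in> F \<inter> cball x (r + e)" by blast
  have "y \<in> F" using y[rule_format, of 1] by simp
  moreover have "dist x y \<le> r" by (rule field_le_epsilon) (use y in auto)
  ultimately show ?thesis by blast
qed

lemma set_dist_le_dist: "x \<in> A \<Longrightarrow> y \<in> B \<Longrightarrow> set_dist A B \<le> dist x y"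
  unfolding set_dist_def by (rule cInf_lower) (auto intro: bdd_belowI[of _ 0])

lemma set_dist_less_imp_dist_less:
  assumes "A \<noteq> {}" "B \<noteq> {}" "set_dist A B < d"
  shows "\<exists>x\<in>A. \<exists>y\<in>B. dist x y < d"
proof -
  have "{dist x y | x y. x \<in> A \<and> y \<in> B} \<noteq> {}" using assms(1,2) by blast
  from cInf_lessD[OF this] show ?thesis using assms(3) unfolding set_dist_def by blast
qed

lemma set_dist_eqI:
  assumes "x \<in> A" "y \<in> B" "dist x y = d" "\<And>x y. x \<in> A \<Longrightarrow> y \<in> B \<Longrightarrow> d \<le> dist x y"
  shows "set_dist A B = d"
  unfolding set_dist_def by (rule cInf_eq_minimum) (use assms in blast)+

lemma set_dist_attained:
  fixes A B :: "'a::metric_space set"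
  assumes rf: "reflexive_space TYPE('a)" and bc: "busemann_convex TYPE('a)"
    and gs: "geodesic_space TYPE('a)" and "bounded A"
    and A: "A \<noteq> {}" "closed A" "gconvex A" and B: "B \<noteq> {}" "closed B" "gconvex B"
  shows "\<exists>x\<in>A. \<exists>y\<in>B. dist x y = set_dist A B"
proof -
  define D where "D = set_dist A B"
  define S where "S e = {x\<in>A. infdist x B \<le> D + e}" for e
  have "\<exists>x. \<forall>e\<in>{0<..}. x \<in> S e"
  proof (rule reflexive_space_common_point[OF rf])
    fix e d :: real
    show "S e \<subseteq> S d \<or> S d \<subseteq> S e" unfolding S_def by (cases "e \<le> d") auto
    assume "e \<in> {0<..}"
    then have "set_dist A B < D + e" by (simp add: D_def)
    then obtain x y where "x \<in> A" "y \<in> B" "dist x y < D + e"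
      using set_dist_less_imp_dist_less[OF A(1) B(1)] by blast
    then have "x \<in> S e" unfolding S_def using infdist_le2[of y B x] by auto
    moreover have "closed (S e)" unfolding S_def by (rule closed_infdist_sublevel[OF A(2)])
    moreover have "gconvex (S e)" unfolding S_def by (rule gconvex_infdist_sublevel[OF bc gs A(3) B(3,1)])
    moreover have "bounded (S e)" unfolding S_def by (rule bounded_subset[OF \<open>bounded A\<close>]) auto
    ultimately show "S e \<noteq> {} \<and> closed (S e) \<and> gconvex (S e) \<and> bounded (S e)" by blast
  qed auto
  then obtain x where x: "\<forall>e\<in>{0<..}. x \<in> S e" by blast
  have "x \<in> A" using x[rule_format, of 1] by (simp add: S_def)
  have "infdist x B \<le> D" by (rule field_le_epsilon) (use x in \<open>auto simp: S_def\<close>)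
  then obtain y where y: "y \<in> B" "dist x y \<le> D"
    using reflexive_infdist_attained[OF rf bc B(2,3,1)] by blast
  have "D \<le> dist x y" unfolding D_def by (rule set_dist_le_dist[OF \<open>x \<in> A\<close> y(1)])
  with y have "dist x y = set_dist A B" by (simp add: D_def)
  with \<open>x \<in> A\<close> y(1) show ?thesis by blast
qed

lemma dist_le_pt_delta: "bounded A \<Longrightarrow> y \<in> A \<Longrightarrow> dist x y \<le> pt_delta x A"
  unfolding pt_delta_def bounded_any_center[of A x]
  by (rule cSup_upper) (auto intro: bdd_aboveI)

lemma dist_le_set_delta:
  assumes "bounded A" "bounded B" "x \<in> A" "y \<in> B"
  shows "dist x y \<le> set_delta A B"
proof -
  have "bounded (A \<union> B)" using assms(1,2) by simp
  then obtain e where "\<forall>x\<in>A \<union> B. \<forall>y\<in>A \<union> B. dist x y \<le> e"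
    unfolding bounded_two_points by blast
  then show ?thesis unfolding set_delta_def by (intro cSup_upper bdd_aboveI[of _ e]) (use assms in auto)
qed

lemma set_delta_le:
  "A \<noteq> {} \<Longrightarrow> B \<noteq> {} \<Longrightarrow> (\<And>x y. x \<in> A \<Longrightarrow> y \<in> B \<Longrightarrow> dist x y \<le> r) \<Longrightarrow> set_delta A B \<le> r"
  unfolding set_delta_def by (rule cSup_least) auto

definition admissible_pair ::
    "'a::metric_space set \<Rightarrow> 'a set \<Rightarrow> ('a \<Rightarrow> 'a) \<Rightarrow> real \<Rightarrow> 'a set \<Rightarrow> 'a set \<Rightarrow> bool" where
  "admissible_pair A B T D E F \<longleftrightarrow> E \<subseteq> A \<and> F \<subseteq> B \<and> closed E \<and> closed F \<and> gconvex E \<and> gconvex F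
     \<and> T ` E \<subseteq> E \<and> T ` F \<subseteq> F \<and> (\<exists>x\<in>E. \<exists>y\<in>F. dist x y = D)"

lemma admissible_pairD:
  assumes "admissible_pair A B T D E F"
  shows "E \<subseteq> A" "F \<subseteq> B" "closed E" "closed F" "gconvex E" "gconvex F" "T ` E \<subseteq> E" "T ` F \<subseteq> F"
    "\<exists>x\<in>E. \<exists>y\<in>F. dist x y = D"
  using assms unfolding admissible_pair_def by auto

lemma admissible_pair_swap: "admissible_pair A B T D E F \<longleftrightarrow> admissible_pair B A T D F E"
  unfolding admissible_pair_def by (metis dist_commute)

lemma admissible_pair_Inter_chain:
  fixes A B :: "'a::metric_space set"
  assumes rf: "reflexive_space TYPE('a)" and bc: "busemann_convex TYPE('a)"
    and gs: "geodesic_space TYPE('a)" and "bounded A"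
    and lower: "\<And>x y. x \<in> A \<Longrightarrow> y \<in> B \<Longrightarrow> D \<le> dist x y"
    and "C \<noteq> {}" and adm: "\<And>P. P \<in> C \<Longrightarrow> admissible_pair A B T D (fst P) (snd P)"
    and chain: "\<And>P Q. P \<in> C \<Longrightarrow> Q \<in> C \<Longrightarrow>
      fst P \<subseteq> fst Q \<and> snd P \<subseteq> snd Q \<or> fst Q \<subseteq> fst P \<and> snd Q \<subseteq> snd P"
  shows "admissible_pair A B T D (\<Inter>(fst ` C)) (\<Inter>(snd ` C))"
proof -
  note P = admissible_pairD[OF adm]
  have snd_ne: "snd P \<noteq> {}" if "P \<in> C" for P using P(9)[OF that] by blast
  define L :: "'a set \<times> 'a set \<Rightarrow> 'a set" where "L P = {x\<in>fst P. infdist x (snd P) \<le> D}" for P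
  have "\<exists>x. \<forall>P\<in>C. x \<in> L P"
  proof (rule reflexive_space_common_point[OF rf \<open>C \<noteq> {}\<close>])
    fix P Q assume "P \<in> C" "Q \<in> C"
    have mono: "L P \<subseteq> L Q" if "fst P \<subseteq> fst Q" "snd P \<subseteq> snd Q" "P \<in> C" for P Q
      unfolding L_def by (rule infdist_sublevel_mono) (use that snd_ne in auto)
    show "L P \<subseteq> L Q \<or> L Q \<subseteq> L P"
      using chain[OF \<open>P \<in> C\<close> \<open>Q \<in> C\<close>] mono \<open>P \<in> C\<close> \<open>Q \<in> C\<close> by blast
  next
    fix P assume "P \<in> C"
    obtain x y where "x \<in> fst P" "y \<in> snd P" "dist x y = D" using P(9)[OF \<open>P \<in> C\<close>] by blast
    then have "x \<in> L P" using infdist_le[of y "snd P" x] by (auto simp: L_def)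
    moreover have "closed (L P)" unfolding L_def by (rule closed_infdist_sublevel[OF P(3)[OF \<open>P \<in> C\<close>]])
    moreover have "gconvex (L P)"
      unfolding L_def by (rule gconvex_infdist_sublevel[OF bc gs P(5,6) snd_ne]) (fact \<open>P \<in> C\<close>)+
    moreover have "bounded (L P)"
      using P(1)[OF \<open>P \<in> C\<close>] by (intro bounded_subset[OF \<open>bounded A\<close>]) (auto simp: L_def)
    ultimately show "L P \<noteq> {} \<and> closed (L P) \<and> gconvex (L P) \<and> bounded (L P)" by blast
  qed
  then obtain x0 where x0: "\<And>P. P \<in> C \<Longrightarrow> x0 \<in> fst P \<and> infdist x0 (snd P) \<le> D"
    by (auto simp: L_def)
  have "\<exists>y. \<forall>P\<in>C. y \<in> snd P \<inter> cball x0 D"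
  proof (rule reflexive_space_common_point[OF rf \<open>C \<noteq> {}\<close>])
    fix P Q assume "P \<in> C" "Q \<in> C"
    then show "snd P \<inter> cball x0 D \<subseteq> snd Q \<inter> cball x0 D \<or> snd Q \<inter> cball x0 D \<subseteq> snd P \<inter> cball x0 D"
      using chain[of P Q] by blast
  next
    fix P assume "P \<in> C"
    obtain y where "y \<in> snd P" "dist x0 y \<le> D"
      using reflexive_infdist_attained[OF rf bc P(4,6) snd_ne] x0 \<open>P \<in> C\<close> by blast
    then show "snd P \<inter> cball x0 D \<noteq> {} \<and> closed (snd P \<inter> cball x0 D)
        \<and> gconvex (snd P \<inter> cball x0 D) \<and> bounded (snd P \<inter> cball x0 D)"
      using P(4)[OF \<open>P \<in> C\<close>] gconvex_Int[OF P(6)[OF \<open>P \<in> C\<close>] gconvex_cball[OF bc]] by auto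
  qed
  then obtain y0 where y0: "\<And>P. P \<in> C \<Longrightarrow> y0 \<in> snd P \<and> dist x0 y0 \<le> D" by auto
  obtain P0 where "P0 \<in> C" using \<open>C \<noteq> {}\<close> by blast
  have "x0 \<in> A" "y0 \<in> B" using x0 y0 P(1,2) \<open>P0 \<in> C\<close> by blast+
  then have "dist x0 y0 = D" using lower y0[OF \<open>P0 \<in> C\<close>] by (meson order_antisym)
  moreover have "x0 \<in> \<Inter>(fst ` C)" "y0 \<in> \<Inter>(snd ` C)" using x0 y0 by auto
  moreover have "\<Inter>(fst ` C) \<subseteq> A" "\<Inter>(snd ` C) \<subseteq> B" using P(1,2) \<open>P0 \<in> C\<close> by blast+
  moreover have "closed (\<Inter>(fst ` C))" "closed (\<Inter>(snd ` C))"
    using P(3,4) by (simp_all add: closed_Inter)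
  moreover have "gconvex (\<Inter>(fst ` C))" "gconvex (\<Inter>(snd ` C))"
    by (rule gconvex_Inter, use P(5,6) in blast)+
  moreover have "T ` \<Inter>(fst ` C) \<subseteq> \<Inter>(fst ` C)" "T ` \<Inter>(snd ` C) \<subseteq> \<Inter>(snd ` C)"
    using P(7,8) by (fastforce simp: image_subset_iff)+
  ultimately show ?thesis unfolding admissible_pair_def by blast
qed

locale minimal_admissible_pair =
  fixes A B :: "'a::metric_space set" and T :: "'a \<Rightarrow> 'a" and D :: real and K1 K2 :: "'a set"
  assumes reflexive: "reflexive_space TYPE('a)"
    and busemann: "busemann_convex TYPE('a)"
    and geodesic: "geodesic_space TYPE('a)"
    and nonexpansive: "\<forall>x\<in>A. \<forall>y\<in>B. dist (T x) (T y) \<le> dist x y"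
    and dist_lower: "\<And>x y. x \<in> A \<Longrightarrow> y \<in> B \<Longrightarrow> D \<le> dist x y"
    and admissible: "admissible_pair A B T D K1 K2"
    and minimal: "\<And>E F. admissible_pair A B T D E F \<Longrightarrow> E \<subseteq> K1 \<Longrightarrow> F \<subseteq> K2 \<Longrightarrow> E = K1 \<and> F = K2"

lemma minimal_admissible_pair_exists:
  fixes A B :: "'a::metric_space set"
  assumes rf: "reflexive_space TYPE('a)" and bc: "busemann_convex TYPE('a)"
    and gs: "geodesic_space TYPE('a)" and "bounded A"
    and ne: "\<forall>x\<in>A. \<forall>y\<in>B. dist (T x) (T y) \<le> dist x y"
    and lower: "\<And>x y. x \<in> A \<Longrightarrow> y \<in> B \<Longrightarrow> D \<le> dist x y"
    and AB: "admissible_pair A B T D A B"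
  shows "\<exists>K1 K2. minimal_admissible_pair A B T D K1 K2"
proof -
  define fam where "fam = {P. admissible_pair A B T D (fst P) (snd P)}"
  define above :: "'a set \<times> 'a set \<Rightarrow> 'a set \<times> 'a set \<Rightarrow> bool"
    where "above P Q \<longleftrightarrow> fst Q \<subseteq> fst P \<and> snd Q \<subseteq> snd P" for P Q
  have po: "partial_order_on fam (relation_of above fam)"
    by (rule partial_order_on_relation_ofI) (auto simp: above_def prod_eq_iff)
  have "\<exists>M\<in>fam. \<forall>P\<in>fam. above M P \<longrightarrow> P = M"
  proof (rule predicate_Zorn[OF po])
    fix C assume C: "C \<in> Chains (relation_of above fam)"
    then have C_fam: "C \<subseteq> fam" and C_chain: "\<And>P Q. P \<in> C \<Longrightarrow> Q \<in> C \<Longrightarrow> above P Q \<or> above Q P"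
      unfolding Chains_def relation_of_def by auto
    show "\<exists>U\<in>fam. \<forall>P\<in>C. above P U"
    proof (cases "C = {}")
      case True
      then show ?thesis using AB by (auto simp: fam_def)
    next
      case False
      have adm: "admissible_pair A B T D (fst P) (snd P)" if "P \<in> C" for P
        using C_fam that by (auto simp: fam_def)
      have chain: "fst P \<subseteq> fst Q \<and> snd P \<subseteq> snd Q \<or> fst Q \<subseteq> fst P \<and> snd Q \<subseteq> snd P"
        if "P \<in> C" "Q \<in> C" for P Q
        using C_chain[OF that] unfolding above_def by blast
      have "admissible_pair A B T D (\<Inter>(fst ` C)) (\<Inter>(snd ` C))"
        by (rule admissible_pair_Inter_chain[OF rf bc gs \<open>bounded A\<close> lower False adm chain])
      then show ?thesis
        by (intro bexI[of _ "(\<Inter>(fst ` C), \<Inter>(snd ` C))"]) (auto simp: fam_def above_def)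
    qed
  qed
  then obtain M where M: "M \<in> fam" and M_min: "\<And>P. P \<in> fam \<Longrightarrow> above M P \<Longrightarrow> P = M" by blast
  have "minimal_admissible_pair A B T D (fst M) (snd M)"
  proof (unfold_locales)
    show "admissible_pair A B T D (fst M) (snd M)" using M by (simp add: fam_def)
    show "E = fst M \<and> F = snd M" if "admissible_pair A B T D E F" "E \<subseteq> fst M" "F \<subseteq> snd M" for E F
      using M_min[of "(E, F)"] that by (auto simp: fam_def above_def)
  qed (fact rf bc gs ne lower)+
  then show ?thesis by blast
qed

context minimal_admissible_pair
begin

lemmas K_adm = admissible_pairD[OF admissible]

lemma nonempty: "K1 \<noteq> {}" "K2 \<noteq> {}"
  using K_adm(9) by auto

lemma nonexpansive_K: "x \<in> K1 \<Longrightarrow> y \<in> K2 \<Longrightarrow> dist (T x) (T y) \<le> dist x y"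
  using nonexpansive K_adm(1,2) by blast

lemma dist_lower_K: "x \<in> K1 \<Longrightarrow> y \<in> K2 \<Longrightarrow> D \<le> dist x y"
  using dist_lower K_adm(1,2) by blast

lemma swapped: "minimal_admissible_pair B A T D K2 K1"
proof
  show "\<forall>x\<in>B. \<forall>y\<in>A. dist (T x) (T y) \<le> dist x y"
    using nonexpansive by (metis dist_commute)
  show "D \<le> dist y x" if "y \<in> B" "x \<in> A" for x y
    using dist_lower[OF that(2,1)] by (simp add: dist_commute)
  show "admissible_pair B A T D K2 K1" using admissible by (simp add: admissible_pair_swap)
  show "F = K2 \<and> E = K1" if "admissible_pair B A T D F E" "F \<subseteq> K2" "E \<subseteq> K1" for E F
    using minimal[of E F] that by (simp add: admissible_pair_swap)
qed (fact reflexive busemann geodesic)+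

lemma proximal:
  assumes "x \<in> K1"
  shows "\<exists>y\<in>K2. dist x y = D"
proof -
  define K1' where "K1' = {x\<in>K1. infdist x K2 \<le> D}"
  have "T ` K1' \<subseteq> K1'"
  proof
    fix z assume "z \<in> T ` K1'"
    then obtain x where x: "x \<in> K1" "infdist x K2 \<le> D" "z = T x" by (auto simp: K1'_def)
    obtain y where y: "y \<in> K2" "dist x y \<le> D"
      using reflexive_infdist_attained[OF reflexive busemann K_adm(4,6) nonempty(2) x(2)] by blast
    have "infdist (T x) K2 \<le> D"
      using infdist_le2[of "T y" K2] K_adm(8) y nonexpansive_K[OF x(1) y(1)] by fastforce
    then show "z \<in> K1'" using K_adm(7) x by (auto simp: K1'_def)
  qed
  moreover have "closed K1'" "gconvex K1'"
    unfolding K1'_def using closed_infdist_sublevel[OF K_adm(3)]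
      gconvex_infdist_sublevel[OF busemann geodesic K_adm(5,6) nonempty(2)] by blast+
  moreover obtain x0 y0 where "x0 \<in> K1" "y0 \<in> K2" "dist x0 y0 = D" using K_adm(9) by blast
  moreover from this have "x0 \<in> K1'" using infdist_le2[of y0 K2 x0 D] by (simp add: K1'_def)
  moreover have "K1' \<subseteq> A" using K_adm(1) by (auto simp: K1'_def)
  ultimately have "admissible_pair A B T D K1' K2"
    using K_adm(2,4,6,8) unfolding admissible_pair_def by blast
  then have "K1' = K1" using minimal[of K1' K2] by (auto simp: K1'_def)
  then have "infdist x K2 \<le> D" using assms by (auto simp: K1'_def)
  then obtain y where "y \<in> K2" "dist x y \<le> D"
    using reflexive_infdist_attained[OF reflexive busemann K_adm(4,6) nonempty(2)] by blast
  then show ?thesis using dist_lower_K[OF assms] by force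
qed

lemma cball_invariant:
  assumes x: "x \<in> K1" and radius: "K2 \<subseteq> cball x \<rho>"
  shows "K2 \<subseteq> cball (T x) \<rho>"
proof -
  define F where "F = K2 \<inter> cball (T x) \<rho>"
  obtain y where y: "y \<in> K2" "dist (T x) y = D" using proximal K_adm(7) x by blast
  have "D \<le> \<rho>" using dist_lower_K[OF x y(1)] radius y(1) by auto
  have "T ` F \<subseteq> F"
  proof
    fix z assume "z \<in> T ` F"
    then obtain w where w: "w \<in> K2" "z = T w" by (auto simp: F_def)
    have "dist (T x) (T w) \<le> \<rho>" using nonexpansive_K[OF x w(1)] radius w(1) by auto
    then show "z \<in> F" using K_adm(8) w by (auto simp: F_def)
  qed
  moreover have "closed F" "gconvex F"
    using K_adm(4) gconvex_Int[OF K_adm(6) gconvex_cball[OF busemann]] by (auto simp: F_def)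
  moreover have "T x \<in> K1" "y \<in> F" using K_adm(7) x y \<open>D \<le> \<rho>\<close> by (auto simp: F_def)
  moreover have "F \<subseteq> B" using K_adm(2) by (auto simp: F_def)
  ultimately have "admissible_pair A B T D K1 F"
    using K_adm(1,3,5,7) y(2) unfolding admissible_pair_def by blast
  then show ?thesis using minimal[of K1 F] by (auto simp: F_def)
qed

lemma cball_uniform:
  assumes "x0 \<in> K1" "K2 \<subseteq> cball x0 \<rho>" "x \<in> K1"
  shows "K2 \<subseteq> cball x \<rho>"
proof -
  define L where "L = K1 \<inter> (\<Inter>y\<in>K2. cball y \<rho>)"
  have L_iff: "z \<in> L \<longleftrightarrow> z \<in> K1 \<and> K2 \<subseteq> cball z \<rho>" for z
    unfolding L_def by (auto simp: dist_commute)
  have "T ` L \<subseteq> L"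
  proof
    fix z assume "z \<in> T ` L"
    then obtain w where "w \<in> K1" "K2 \<subseteq> cball w \<rho>" "z = T w" by (auto simp: L_iff)
    then show "z \<in> L" using K_adm(7) cball_invariant by (auto simp: L_iff)
  qed
  moreover have "closed L" unfolding L_def using K_adm(3) by blast
  moreover have "gconvex L"
    unfolding L_def using K_adm(5) gconvex_cball[OF busemann] by (intro gconvex_Int gconvex_Inter) auto
  moreover obtain y0 where "y0 \<in> K2" "dist x0 y0 = D" using proximal assms(1) by blast
  moreover have "x0 \<in> L" using assms(1,2) by (simp add: L_iff)
  moreover have "L \<subseteq> A" using K_adm(1) by (auto simp: L_def)
  ultimately have "admissible_pair A B T D L K2"
    using K_adm(2,4,6,8) unfolding admissible_pair_def by blast
  then have "L = K1" using minimal[of L K2] by (auto simp: L_def)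
  then show ?thesis using assms(3) L_iff[of x] by blast
qed

lemma bounded_K2:
  assumes "bounded K1"
  shows "bounded K2"
proof -
  interpret swap: minimal_admissible_pair B A T D K2 K1 by (rule swapped)
  obtain a R where aR: "\<forall>x\<in>K1. dist a x \<le> R" using assms unfolding bounded_def by blast
  have "dist a y \<le> R + D" if y: "y \<in> K2" for y
  proof -
    obtain x where x: "x \<in> K1" "dist y x = D" using swap.proximal[OF y] by blast
    have "dist a x \<le> R" using aR x(1) by blast
    moreover have "dist x y = D" using x(2) by (simp add: dist_commute)
    ultimately show ?thesis using dist_triangle[of a y x] by linarith
  qed
  then show ?thesis unfolding bounded_def by blast
qed

lemma set_dist_K: "set_dist K1 K2 = D"
proof -
  obtain x y where "x \<in> K1" "y \<in> K2" "dist x y = D" using K_adm(9) by blast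
  then show ?thesis by (rule set_dist_eqI[OF _ _ _ dist_lower_K])
qed

lemma proximal_pair_K: "proximal_pair K1 K2"
proof -
  interpret swap: minimal_admissible_pair B A T D K2 K1 by (rule swapped)
  have "\<exists>a'\<in>K1. \<exists>b'\<in>K2. dist a b' = D \<and> dist a' b = D" if ab: "a \<in> K1" "b \<in> K2" for a b
  proof -
    obtain b' where "b' \<in> K2" "dist a b' = D" using proximal[OF ab(1)] by blast
    moreover obtain a' where "a' \<in> K1" "dist b a' = D" using swap.proximal[OF ab(2)] by blast
    ultimately show ?thesis by (metis dist_commute)
  qed
  then show ?thesis unfolding proximal_pair_def set_dist_K by blast
qed

lemma diametral:
  assumes "bounded A" "proximal_normal_structure A B" "D = set_dist A B"
    and "x \<in> K1" "y \<in> K2"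
  shows "dist x y = D"
proof -
  have bdd: "bounded K1" "bounded K2" using bounded_subset[OF assms(1) K_adm(1)] bounded_K2 by blast+
  have "set_delta K1 K2 \<le> D"
  proof (rule ccontr)
    assume "\<not> set_delta K1 K2 \<le> D"
    then have "set_dist K1 K2 < set_delta K1 K2" "set_dist K1 K2 = set_dist A B"
      using set_dist_K assms(3) by auto
    then have "\<exists>x1\<in>K1. \<exists>x2\<in>K2. pt_delta x1 K2 < set_delta K1 K2 \<and> pt_delta x2 K1 < set_delta K1 K2"
      using nonempty K_adm(1-6) bdd proximal_pair_K
      by (intro assms(2)[unfolded proximal_normal_structure_def, rule_format]) auto
    then obtain x1 where x1: "x1 \<in> K1" "pt_delta x1 K2 < set_delta K1 K2" by blast
    have "K2 \<subseteq> cball x1 (pt_delta x1 K2)" using dist_le_pt_delta[OF bdd(2)] by auto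
    then have "K2 \<subseteq> cball x (pt_delta x1 K2)" if "x \<in> K1" for x
      by (rule cball_uniform[OF x1(1) _ that])
    then have "set_delta K1 K2 \<le> pt_delta x1 K2"
      using set_delta_le[OF nonempty] by (simp add: subset_iff)
    then show False using x1(2) by simp
  qed
  then show ?thesis using dist_le_set_delta[OF bdd assms(4,5)] dist_lower_K[OF assms(4,5)] by simp
qed

lemma fixed_points:
  assumes "bounded A" "proximal_normal_structure A B" "D = set_dist A B"
  shows "\<exists>x\<in>A. \<exists>y\<in>B. T x = x \<and> T y = y \<and> dist x y = D"
proof -
  obtain x y where xy: "x \<in> K1" "y \<in> K2" using nonempty by blast
  have "T x \<in> K1" "T y \<in> K2" using K_adm(7,8) xy by blast+
  have "\<forall>s\<in>K1. dist s y = D" using diametral[OF assms _ xy(2)] by blast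
  from gconvex_on_sphere_trivial[OF busemann geodesic K_adm(5) this \<open>T x \<in> K1\<close> xy(1)]
  have "T x = x" .
  have "\<forall>s\<in>K2. dist s x = D" using diametral[OF assms xy(1)] by (simp add: dist_commute)
  from gconvex_on_sphere_trivial[OF busemann geodesic K_adm(6) this \<open>T y \<in> K2\<close> xy(2)]
  have "T y = y" .
  show ?thesis using \<open>T x = x\<close> \<open>T y = y\<close> diametral[OF assms xy] xy K_adm(1,2) by blast
qed

end

theorem mainTheorem3:
  fixes A B :: "'a::metric_space set" and T :: "'a \<Rightarrow> 'a"
  assumes "reflexive_space TYPE('a)" and "busemann_convex TYPE('a)"
    and "geodesic_space TYPE('a)"
    and "A \<noteq> {}" "B \<noteq> {}" "closed A" "closed B" "gconvex A" "gconvex B" "bounded A"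
    and "T ` A \<subseteq> A" "T ` B \<subseteq> B"
    and "\<forall>x\<in>A. \<forall>y\<in>B. dist (T x) (T y) \<le> dist x y"
    and "proximal_normal_structure A B"
  shows "\<exists>x\<in>A. \<exists>y\<in>B. T x = x \<and> T y = y \<and> dist x y = set_dist A B"
proof -
  have "admissible_pair A B T (set_dist A B) A B"
    using set_dist_attained[OF assms(1-3,10,4,6,8,5,7,9)] assms(6-9,11,12)
    unfolding admissible_pair_def by blast
  with minimal_admissible_pair_exists[OF assms(1-3,10,13) set_dist_le_dist]
  obtain K1 K2 where "minimal_admissible_pair A B T (set_dist A B) K1 K2" by blast
  from minimal_admissible_pair.fixed_points[OF this assms(10,14) refl] show ?thesis .
qed

end
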